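(* For every (convex) polytope $P\subset\mathbb{R}^d$ with vertex set $V(P)$, we have $f(P)=f(V(P))$.
   Context: For a bounded set $S\subset\mathbb{R}^d$ with the Euclidean distance, its Borsuk number $f(S)$ is the minimum number of parts in a partition of $S$ in which every part has diameter strictly smaller than the diameter of $S$ (with $f(S)=+\infty$ if no such partition exists, e.g. when $S$ is a single point). *)

theory Defs
  imports "HOL-Analysis.Analysis" "HOL-Library.Extended_Nat" "HOL-Library.Disjoint_Sets"
begin

text \<open>Borsuk number: minimal number of parts of a partition of S into parts of
diameter strictly smaller than diameter S; infinity (INF of the empty set) if none exists.\<close>
definition borsuk_number :: "'a::metric_space set \<Rightarrow> enat" where
  "borsuk_number S =
     (INF n \<in> {n. \<exists>\<P>. partition_on S \<P> \<and> finite \<P> \<and> card \<P> = n \<and>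
                     (\<forall>A\<in>\<P>. diameter A < diameter S)}. enat n)"

end

theory Submission
  imports Defs
begin

text \<open>Write the polytope as \<open>P = convex hull V\<close>, \<open>V\<close> its finite vertex set; both sets have the
same diameter \<open>D\<close>. Restricting a Borsuk partition of \<open>P\<close> to \<open>V\<close> gives \<open>f(V) \<le> f(P)\<close>.
Conversely, let \<open>V\<close> be split into \<open>k\<close> parts of diameter \<open>< D\<close>. Every \<open>x \<in> P\<close> is a convex
combination of the vertices, and by pigeonhole its weights give mass \<open>\<ge> 1/k\<close> to some part \<open>A\<close>.
If \<open>x\<close> and \<open>y\<close> both give mass \<open>\<ge> 1/k\<close> to \<open>A\<close>, then expanding \<open>x - y\<close> over pairs of
vertices shows \<open>\<parallel>x - y\<parallel> \<le> D - (D - diameter A) / k\<^sup>2 < D\<close>, so assigning each point of \<open>P\<close>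
to such a part gives a partition of \<open>P\<close> into \<open>k\<close> small pieces.\<close>

lemma borsuk_number_le_card:
  assumes "partition_on S \<P>" "finite \<P>" "\<forall>A\<in>\<P>. diameter A < diameter S"
  shows "borsuk_number S \<le> card \<P>"
  unfolding borsuk_number_def by (rule INF_lower2[of "card \<P>"]) (use assms in auto)

lemma borsuk_number_greatest:
  fixes n :: enat
  assumes "\<And>\<P>. partition_on S \<P> \<Longrightarrow> finite \<P> \<Longrightarrow> \<forall>A\<in>\<P>. diameter A < diameter S \<Longrightarrow> n \<le> enat (card \<P>)"
  shows "n \<le> borsuk_number S"
  unfolding borsuk_number_def by (rule INF_greatest) (use assms in auto)

lemma borsuk_number_le_card_cover:
  fixes S :: "'a::metric_space set"
  assumes "finite \<C>" "S \<subseteq> \<Union>\<C>" and small: "\<And>C. C \<in> \<C> \<Longrightarrow> bounded C \<and> diameter C < diameter S"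
  shows "borsuk_number S \<le> card \<C>"
proof -
  have "\<forall>x\<in>S. \<exists>C. C \<in> \<C> \<and> x \<in> C"
    using \<open>S \<subseteq> \<Union>\<C>\<close> by blast
  then obtain G where G: "\<And>x. x \<in> S \<Longrightarrow> G x \<in> \<C> \<and> x \<in> G x"
    by metis
  define \<P> where "\<P> = (\<lambda>C. {x \<in> S. G x = C}) ` \<C> - {{}}"
  have "partition_on S \<P>"
    using G by (auto simp: \<P>_def partition_on_def disjoint_def)
  moreover have "finite \<P>"
    using \<open>finite \<C>\<close> by (simp add: \<P>_def)
  moreover have "card \<P> \<le> card \<C>"
    unfolding \<P>_def by (rule order_trans[OF card_Diff1_le card_image_le[OF \<open>finite \<C>\<close>]])
  moreover have "diameter B < diameter S" if "B \<in> \<P>" for B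
  proof -
    obtain C where "C \<in> \<C>" "B \<subseteq> C"
      using \<open>B \<in> \<P>\<close> G by (auto simp: \<P>_def)
    then show ?thesis
      using small diameter_subset by (meson le_less_trans)
  qed
  ultimately show ?thesis
    by (meson borsuk_number_le_card enat_ord_simps(1) order_trans)
qed

lemma borsuk_number_mono_same_diameter:
  fixes S T :: "'a::metric_space set"
  assumes "T \<subseteq> S" "bounded S" "diameter T = diameter S"
  shows "borsuk_number T \<le> borsuk_number S"
proof (rule borsuk_number_greatest)
  fix \<P> assume \<P>: "partition_on S \<P>" "finite \<P>" "\<forall>A\<in>\<P>. diameter A < diameter S"
  show "borsuk_number T \<le> card \<P>"
  proof (rule borsuk_number_le_card_cover)
    show "T \<subseteq> \<Union>\<P>"
      using \<P>(1) \<open>T \<subseteq> S\<close> by (simp add: partition_on_def)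
    show "bounded C \<and> diameter C < diameter T" if "C \<in> \<P>" for C
    proof -
      have "C \<subseteq> S" using that \<P>(1) by (auto simp: partition_on_def)
      then show ?thesis using that \<P>(3) assms(2,3) bounded_subset by auto
    qed
  qed (use \<P> in simp)
qed

lemma dist_convex_combinations_le:
  fixes V :: "'a::real_normed_vector set"
  assumes "finite V" "\<forall>v\<in>V. 0 \<le> u v" "sum u V = 1" "\<forall>v\<in>V. 0 \<le> w v" "sum w V = 1"
  shows "dist (\<Sum>v\<in>V. u v *\<^sub>R v) (\<Sum>v\<in>V. w v *\<^sub>R v) \<le> (\<Sum>v\<in>V. \<Sum>x\<in>V. u v * w x * dist v x)"
proof -
  have u: "(\<Sum>v\<in>V. u v *\<^sub>R v) = (\<Sum>v\<in>V. \<Sum>x\<in>V. (u v * w x) *\<^sub>R v)"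
    by (simp add: scaleR_sum_left[symmetric] sum_distrib_left[symmetric] assms)
  have w: "(\<Sum>x\<in>V. w x *\<^sub>R x) = (\<Sum>v\<in>V. \<Sum>x\<in>V. (u v * w x) *\<^sub>R x)"
    by (subst sum.swap) (simp add: scaleR_sum_left[symmetric] sum_distrib_right[symmetric] assms mult.commute)
  have "dist (\<Sum>v\<in>V. u v *\<^sub>R v) (\<Sum>v\<in>V. w v *\<^sub>R v) = norm (\<Sum>v\<in>V. \<Sum>x\<in>V. (u v * w x) *\<^sub>R (v - x))"
    unfolding dist_norm u w by (simp add: sum_subtractf scaleR_diff_right)
  also have "\<dots> \<le> (\<Sum>v\<in>V. \<Sum>x\<in>V. norm ((u v * w x) *\<^sub>R (v - x)))"
    by (rule order_trans[OF norm_sum sum_mono[OF norm_sum]])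
  also have "\<dots> = (\<Sum>v\<in>V. \<Sum>x\<in>V. u v * w x * dist v x)"
    by (intro sum.cong refl) (simp add: assms dist_norm)
  finally show ?thesis .
qed

lemma dist_convex_combinations_le_concentrated:
  fixes V :: "'a::real_normed_vector set"
  assumes "finite V" "\<forall>v\<in>V. 0 \<le> u v" "sum u V = 1" "\<forall>v\<in>V. 0 \<le> w v" "sum w V = 1"
    and "A \<subseteq> V" and D: "\<forall>v\<in>V. \<forall>x\<in>V. dist v x \<le> D" and d: "\<forall>v\<in>A. \<forall>x\<in>A. dist v x \<le> d"
  shows "dist (\<Sum>v\<in>V. u v *\<^sub>R v) (\<Sum>v\<in>V. w v *\<^sub>R v) \<le> D - (D - d) * sum u A * sum w A"
proof -
  let ?uA = "\<lambda>v. if v \<in> A then u v else 0" and ?wA = "\<lambda>v. if v \<in> A then w v else 0"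
  have pair: "u v * w x * dist v x \<le> u v * w x * D - (D - d) * (?uA v * ?wA x)"
    if "v \<in> V" "x \<in> V" for v x
  proof (cases "v \<in> A \<and> x \<in> A")
    case True
    then have "u v * w x * dist v x \<le> u v * w x * d"
      using d assms that by (intro mult_left_mono) auto
    then show ?thesis using True by (simp add: algebra_simps)
  next
    case False
    have "u v * w x * dist v x \<le> u v * w x * D"
      using D assms that by (intro mult_left_mono) auto
    then show ?thesis using False by auto
  qed
  have "dist (\<Sum>v\<in>V. u v *\<^sub>R v) (\<Sum>v\<in>V. w v *\<^sub>R v) \<le> (\<Sum>v\<in>V. \<Sum>x\<in>V. u v * w x * dist v x)"
    using dist_convex_combinations_le assms by blast
  also have "\<dots> \<le> (\<Sum>v\<in>V. \<Sum>x\<in>V. u v * w x * D - (D - d) * (?uA v * ?wA x))"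
    using pair by (intro sum_mono) auto
  also have "\<dots> = (\<Sum>v\<in>V. \<Sum>x\<in>V. u v * w x * D) - (D - d) * (\<Sum>v\<in>V. \<Sum>x\<in>V. ?uA v * ?wA x)"
    by (simp add: sum_subtractf sum_distrib_left)
  also have "(\<Sum>v\<in>V. \<Sum>x\<in>V. u v * w x * D) = D"
    by (simp add: sum_distrib_left[symmetric] sum_distrib_right[symmetric] assms)
  also have "(\<Sum>v\<in>V. \<Sum>x\<in>V. ?uA v * ?wA x) = sum ?uA V * sum ?wA V"
    by (simp add: sum_product)
  also have "sum ?uA V = sum u A"
    using assms by (simp add: sum.If_cases Int_absorb1)
  also have "sum ?wA V = sum w A"
    using assms by (simp add: sum.If_cases Int_absorb1)
  finally show ?thesis by (simp add: mult.assoc)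
qed

lemma diameter_convex_hull_finite:
  fixes V :: "'a::real_normed_vector set"
  assumes "finite V"
  shows "diameter (convex hull V) = diameter V"
proof (rule antisym)
  have bounded: "bounded V" using assms by (rule finite_imp_bounded)
  show "diameter (convex hull V) \<le> diameter V"
  proof (rule diameter_le)
    show "convex hull V \<noteq> {} \<or> 0 \<le> diameter V"
      using diameter_ge_0[OF bounded] by simp
    fix x y assume "x \<in> convex hull V" "y \<in> convex hull V"
    then obtain u w where
      u: "\<forall>v\<in>V. 0 \<le> u v" "sum u V = 1" "(\<Sum>v\<in>V. u v *\<^sub>R v) = x" and
      w: "\<forall>v\<in>V. 0 \<le> w v" "sum w V = 1" "(\<Sum>v\<in>V. w v *\<^sub>R v) = y"
      using convex_hull_finite[OF assms] by auto
    have "dist x y \<le> diameter V - (diameter V - diameter V) * sum u {} * sum w {}"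
      unfolding u(3)[symmetric] w(3)[symmetric]
      by (rule dist_convex_combinations_le_concentrated)
         (use assms u w diameter_bounded_bound[OF bounded] in auto)
    then show "norm (x - y) \<le> diameter V" by (simp add: dist_norm)
  qed
  show "diameter V \<le> diameter (convex hull V)"
    by (intro diameter_subset hull_subset finite_imp_bounded_convex_hull assms)
qed

lemma diameter_convex_combinations_concentrated_less:
  fixes V :: "'a::real_normed_vector set"
  assumes "finite V" "A \<subseteq> V" "diameter A < diameter V" "0 < c"
  shows "diameter {\<Sum>v\<in>V. u v *\<^sub>R v | u. (\<forall>v\<in>V. 0 \<le> u v) \<and> sum u V = 1 \<and> c \<le> sum u A}
           < diameter V" (is "diameter ?H < _")
proof -
  have "bounded V" "bounded A"
    using finite_imp_bounded assms(1) finite_subset[OF assms(2,1)] by auto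
  show ?thesis
  proof (cases "?H = {}")
    case True
    show ?thesis
      unfolding True using diameter_ge_0[OF \<open>bounded A\<close>] assms(3) by simp
  next
    case False
    define D d where "D = diameter V" and "d = diameter A"
    have "diameter ?H \<le> D - (D - d) * c * c"
    proof (rule diameter_le)
      fix x y assume "x \<in> ?H" "y \<in> ?H"
      then obtain u w where
        u: "\<forall>v\<in>V. 0 \<le> u v" "sum u V = 1" "c \<le> sum u A" "x = (\<Sum>v\<in>V. u v *\<^sub>R v)" and
        w: "\<forall>v\<in>V. 0 \<le> w v" "sum w V = 1" "c \<le> sum w A" "y = (\<Sum>v\<in>V. w v *\<^sub>R v)"
        by blast
      have "dist x y \<le> D - (D - d) * sum u A * sum w A"
        unfolding u(4) w(4) D_def d_def
        by (rule dist_convex_combinations_le_concentrated)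
           (use assms u w diameter_bounded_bound[OF \<open>bounded V\<close>]
              diameter_bounded_bound[OF \<open>bounded A\<close>] in auto)
      also have "\<dots> \<le> D - (D - d) * c * c"
      proof -
        have "c * c \<le> sum u A * sum w A"
          using u(3) w(3) \<open>0 < c\<close> by (intro mult_mono) auto
        then show ?thesis
          using assms(3) by (simp add: D_def d_def mult.assoc mult_left_mono)
      qed
      finally show "norm (x - y) \<le> D - (D - d) * c * c" by (simp add: dist_norm)
    qed (use False in simp)
    also have "\<dots> < D"
      using assms by (simp add: D_def d_def)
    finally show ?thesis by (simp add: D_def)
  qed
qed

lemma partition_on_exists_sum_ge_average:
  fixes u :: "'a \<Rightarrow> real"
  assumes "finite V" "partition_on V \<Q>" "V \<noteq> {}"
  shows "\<exists>A\<in>\<Q>. sum u V \<le> card \<Q> * sum u A"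
proof (rule ccontr)
  assume "\<not> ?thesis"
  then have less: "\<forall>A\<in>\<Q>. card \<Q> * sum u A < sum u V" by auto
  have "finite \<Q>" "\<Q> \<noteq> {}"
    using assms finite_elements partition_onD1 by fastforce+
  have "card \<Q> * sum u V = (\<Sum>A\<in>\<Q>. card \<Q> * sum u A)"
    using assms by (simp add: sum.partition[of V \<Q>] sum_distrib_left)
  also have "\<dots> < (\<Sum>A\<in>\<Q>. sum u V)"
    using less \<open>finite \<Q>\<close> \<open>\<Q> \<noteq> {}\<close> by (intro sum_strict_mono) auto
  finally show False by simp
qed

lemma borsuk_number_convex_hull_le:
  fixes V :: "'a::real_normed_vector set"
  assumes "finite V"
  shows "borsuk_number (convex hull V) \<le> borsuk_number V"
proof (rule borsuk_number_greatest)
  fix \<Q> assume \<Q>: "partition_on V \<Q>" "finite \<Q>" "\<forall>A\<in>\<Q>. diameter A < diameter V"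
  define H where "H A = {\<Sum>v\<in>V. u v *\<^sub>R v | u. (\<forall>v\<in>V. 0 \<le> u v) \<and> sum u V = 1 \<and> 1 / card \<Q> \<le> sum u A}" for A
  have "borsuk_number (convex hull V) \<le> card (H ` \<Q>)"
  proof (rule borsuk_number_le_card_cover)
    show "convex hull V \<subseteq> \<Union>(H ` \<Q>)"
    proof
      fix x assume "x \<in> convex hull V"
      then obtain u where u: "\<forall>v\<in>V. 0 \<le> u v" "sum u V = 1" "(\<Sum>v\<in>V. u v *\<^sub>R v) = x"
        using convex_hull_finite[OF assms] by auto
      then have "V \<noteq> {}" by auto
      then obtain A where "A \<in> \<Q>" "1 \<le> card \<Q> * sum u A"
        using partition_on_exists_sum_ge_average[OF assms \<Q>(1), of u] u(2) by auto
      moreover have "card \<Q> > 0"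
        using \<open>A \<in> \<Q>\<close> \<Q>(2) card_gt_0_iff by blast
      ultimately have "1 / card \<Q> \<le> sum u A"
        by (simp add: divide_le_eq mult.commute)
      then have "x \<in> H A"
        unfolding H_def using u by (intro CollectI exI[of _ u]) auto
      then show "x \<in> \<Union>(H ` \<Q>)"
        using \<open>A \<in> \<Q>\<close> by blast
    qed
    fix C assume "C \<in> H ` \<Q>"
    then obtain A where A: "A \<in> \<Q>" "C = H A" by blast
    have "C \<subseteq> convex hull V"
      using A convex_hull_finite[OF assms] by (auto simp: H_def)
    moreover have "diameter C < diameter V"
      unfolding A(2) H_def using A(1) \<Q> assms
      by (intro diameter_convex_combinations_concentrated_less)
         (auto simp: partition_on_def card_gt_0_iff)
    ultimately show "bounded C \<and> diameter C < diameter (convex hull V)"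
      using bounded_subset[OF finite_imp_bounded_convex_hull[OF assms]]
        diameter_convex_hull_finite[OF assms] by auto
  qed (use \<Q> in simp)
  also have "\<dots> \<le> card \<Q>"
    using \<Q>(2) card_image_le by auto
  finally show "borsuk_number (convex hull V) \<le> card \<Q>" .
qed

theorem proposition2p1:
  fixes P :: "'a::euclidean_space set"
  assumes "polytope P"
  shows "borsuk_number P = borsuk_number {v. v extreme_point_of P}"
proof -
  define V where "V = {v. v extreme_point_of P}"
  obtain W where "finite W" "P = convex hull W"
    using assms by (auto simp: polytope_def)
  then have "finite V" and P: "P = convex hull V"
    using extreme_points_of_convex_hull[of W] finite_subset Krein_Milman_polytope[of W]
    by (auto simp: V_def)
  have "borsuk_number P \<le> borsuk_number V"
    unfolding P using \<open>finite V\<close> by (rule borsuk_number_convex_hull_le)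
  moreover have "borsuk_number V \<le> borsuk_number P"
    unfolding P using \<open>finite V\<close>
    by (intro borsuk_number_mono_same_diameter hull_subset finite_imp_bounded_convex_hull
          diameter_convex_hull_finite[symmetric])
  ultimately show ?thesis by (simp add: V_def)
qed

end
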